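(* Let $V$ be a finite-dimensional real vector space and $X\subseteq V$ a finite or countable set in which every $2$-dimensional linear subset has fundamental vectors, equipped with a suitable ordering. Then the subsets of $X$ that are biclosed in $X$ form a complete lattice under containment. More specifically, for any collection $\mathcal{X}$ of biclosed subsets of $X$, \[\bigvee_{Y\in\mathcal{X}}Y=\overline{\bigcup_{Y\in\mathcal{X}}Y},\qquad \bigwedge_{Y\in\mathcal{X}}Y=\Big(\bigcap_{Y\in\mathcal{X}}Y\Big)^{\circ}.\]
   Context: $\mathrm{Span}_+$ denotes nonnegative linear combinations. For $Y\subseteq X$, $B\subseteq Y$: closed in $Y$ if $\alpha,\beta\in B$, $\gamma\in\mathrm{Span}_+(\alpha,\beta)\cap Y$ imply $\gamma\in B$; coclosed if $Y\setminus B$ closed; biclosed if both; weakly separable if $\mathrm{Span}_+(B)\cap\mathrm{Span}_+(Y\setminus B)=\{0\}$; $Y$ is clean if every biclosed subset of $Y$ is weakly separable in $Y$. $\overline{A}$ denotes the closure of $A$ in $X$ (smallest closed subset of $X$ containing $A$) and $A^\circ=X\setminus\overline{X\setminus A}$ the interior (largest coclosed subset of $X$ contained in $A$). A linear subset is $X\cap L$ for a subspace $L$. A $2$-dimensional linear subset $Y$ has fundamental vectors $\alpha,\beta\in Y$ if $Y\subseteq\mathrm{Span}_+\{\alpha,\beta\}$ and neither $\alpha$ nor $\beta$ lies in the nonnegative span of the other elements of $Y$. $F\subseteq X$ is full if $F\cap\mathrm{Span}\{\alpha,\beta\}=X\cap\mathrm{Span}\{\alpha,\beta\}$ for all $\alpha,\beta\in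 F$. An ordering $\gamma_1,\gamma_2,\ldots$ of $X$ with initial segments $X_i=\{\gamma_1,\dots,\gamma_i\}$ is suitable if (1) in every $2$-dimensional linear subset the fundamental vectors precede all its other vectors, and (2) for every $i$ and $\alpha,\beta,\gamma\in X_i$ there is a full $F\subseteq X$ containing them with $F\cap X_i$ clean. *)

theory Defs
  imports "HOL-Analysis.Analysis"
begin

text \<open>Nonnegative linear combinations (finite sums with nonnegative coefficients).
  The empty sum gives 0, so pos_span {} = {0}.\<close>
definition pos_span :: "'v::real_vector set \<Rightarrow> 'v set" where
  "pos_span S = {(\<Sum>v\<in>F. c v *\<^sub>R v) | F c. finite F \<and> F \<subseteq> S \<and> (\<forall>v\<in>F. 0 \<le> c v)}"

definition closed_in_set :: "'v::real_vector set \<Rightarrow> 'v set \<Rightarrow> bool" where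
  "closed_in_set Y B \<longleftrightarrow> B \<subseteq> Y \<and>
     (\<forall>\<alpha>\<in>B. \<forall>\<beta>\<in>B. \<forall>\<gamma>\<in>Y. \<gamma> \<in> pos_span {\<alpha>, \<beta>} \<longrightarrow> \<gamma> \<in> B)"

definition coclosed_in_set :: "'v::real_vector set \<Rightarrow> 'v set \<Rightarrow> bool" where
  "coclosed_in_set Y B \<longleftrightarrow> B \<subseteq> Y \<and> closed_in_set Y (Y - B)"

definition biclosed_in_set :: "'v::real_vector set \<Rightarrow> 'v set \<Rightarrow> bool" where
  "biclosed_in_set Y B \<longleftrightarrow> closed_in_set Y B \<and> coclosed_in_set Y B"

definition weakly_separable :: "'v::real_vector set \<Rightarrow> 'v set \<Rightarrow> bool" where
  "weakly_separable Y B \<longleftrightarrow> pos_span B \<inter> pos_span (Y - B) = {0}"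

definition clean :: "'v::real_vector set \<Rightarrow> bool" where
  "clean Y \<longleftrightarrow> (\<forall>B. biclosed_in_set Y B \<longrightarrow> weakly_separable Y B)"

definition bclosure :: "'v::real_vector set \<Rightarrow> 'v set \<Rightarrow> 'v set" where
  "bclosure X A = \<Inter>{C. closed_in_set X C \<and> A \<subseteq> C}"

definition binterior :: "'v::real_vector set \<Rightarrow> 'v set \<Rightarrow> 'v set" where
  "binterior X A = X - bclosure X (X - A)"

definition two_dim_linear_subset :: "'v::euclidean_space set \<Rightarrow> 'v set \<Rightarrow> bool" where
  "two_dim_linear_subset X Y \<longleftrightarrow> (\<exists>L. subspace L \<and> Y = X \<inter> L) \<and> dim Y = 2"

definition fundamental_vectors :: "'v::real_vector set \<Rightarrow> 'v \<Rightarrow> 'v \<Rightarrow> bool" where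
  "fundamental_vectors Y \<alpha> \<beta> \<longleftrightarrow> \<alpha> \<in> Y \<and> \<beta> \<in> Y \<and> Y \<subseteq> pos_span {\<alpha>, \<beta>} \<and>
     \<alpha> \<notin> pos_span (Y - {\<alpha>}) \<and> \<beta> \<notin> pos_span (Y - {\<beta>})"

definition full_subset :: "'v::real_vector set \<Rightarrow> 'v set \<Rightarrow> bool" where
  "full_subset X F \<longleftrightarrow> F \<subseteq> X \<and>
     (\<forall>\<alpha>\<in>F. \<forall>\<beta>\<in>F. F \<inter> span {\<alpha>, \<beta>} = X \<inter> span {\<alpha>, \<beta>})"

text \<open>An ordering of X is encoded by an injective rank function r : X \<rightarrow> nat
  (gamma_1, gamma_2, ... listed by increasing rank); the initial segments
  are {x \<in> X. r x < i}.\<close>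
definition initial_segment :: "'v set \<Rightarrow> ('v \<Rightarrow> nat) \<Rightarrow> nat \<Rightarrow> 'v set" where
  "initial_segment X r i = {x \<in> X. r x < i}"

definition suitable_ordering :: "'v::euclidean_space set \<Rightarrow> ('v \<Rightarrow> nat) \<Rightarrow> bool" where
  "suitable_ordering X r \<longleftrightarrow> inj_on r X \<and>
     (\<forall>Y \<alpha> \<beta> \<gamma>. two_dim_linear_subset X Y \<and> fundamental_vectors Y \<alpha> \<beta> \<and>
         \<gamma> \<in> Y - {\<alpha>, \<beta>} \<longrightarrow> r \<alpha> < r \<gamma> \<and> r \<beta> < r \<gamma>) \<and>
     (\<forall>i. \<forall>\<alpha>\<in>initial_segment X r i. \<forall>\<beta>\<in>initial_segment X r i. \<forall>\<gamma>\<in>initial_segment X r i.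
         \<exists>F. full_subset X F \<and> \<alpha> \<in> F \<and> \<beta> \<in> F \<and> \<gamma> \<in> F \<and>
             clean (F \<inter> initial_segment X r i))"

end

theory Submission
  imports Defs
begin

(* Let K i be the closure of the union of the family inside the initial segment of
   the i vectors of smallest rank.  By induction on i, K i is biclosed in its segment and
   K (i + 1) meets the i-th segment in K i: the next vector d enters exactly when it lies
   in a member of the family or in the cone of two vectors of K i.  Closedness and
   coclosedness of the extended set reduce to two-element cones through d; these are handled
   by cleanness of full subsets, which separates K i from its complement, and by the
   fundamental vectors of the plane through d, which precede every other vector of that
   plane.  The union of all K i is then biclosed and is the closure of the union; the meet
   follows by complementation. *)

section \<open>Nonnegative spans\<close>

lemma zero_in_pos_span [simp]: "0 \<in> pos_span A"
  unfolding pos_span_def by (auto intro!: exI[of _ "{}"])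

lemma pos_span_superset: "A \<subseteq> pos_span A"
  unfolding pos_span_def by (auto intro!: exI[of _ "{_}"] exI[of _ "\<lambda>_. 1"])

lemma pos_span_mono: "A \<subseteq> B \<Longrightarrow> pos_span A \<subseteq> pos_span B"
  unfolding pos_span_def by blast

lemma pos_span_scaleR:
  assumes "y \<in> pos_span A" "0 \<le> k"
  shows "k *\<^sub>R y \<in> pos_span A"
proof -
  obtain F c where F: "finite F" "F \<subseteq> A" "\<forall>v\<in>F. 0 \<le> c v" and y: "y = (\<Sum>v\<in>F. c v *\<^sub>R v)"
    using assms(1) unfolding pos_span_def by blast
  have "k *\<^sub>R y = (\<Sum>v\<in>F. (k * c v) *\<^sub>R v)"
    by (simp add: y scaleR_sum_right)
  then show ?thesis
    unfolding pos_span_def using F assms(2) by (auto intro!: exI[of _ F])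
qed

lemma pos_span_add:
  assumes "y \<in> pos_span A" "z \<in> pos_span A"
  shows "y + z \<in> pos_span A"
proof -
  obtain F c where F: "finite F" "F \<subseteq> A" "\<forall>v\<in>F. 0 \<le> c v" and y: "y = (\<Sum>v\<in>F. c v *\<^sub>R v)"
    using assms(1) unfolding pos_span_def by blast
  obtain G e where G: "finite G" "G \<subseteq> A" "\<forall>v\<in>G. 0 \<le> e v" and z: "z = (\<Sum>v\<in>G. e v *\<^sub>R v)"
    using assms(2) unfolding pos_span_def by blast
  define c' where "c' v = (if v \<in> F then c v else 0)" for v
  define e' where "e' v = (if v \<in> G then e v else 0)" for v
  have "y = (\<Sum>v\<in>F \<union> G. c' v *\<^sub>R v)" "z = (\<Sum>v\<in>F \<union> G. e' v *\<^sub>R v)"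
    unfolding y z c'_def e'_def using F(1) G(1) by (auto intro!: sum.mono_neutral_cong_left)
  then have "y + z = (\<Sum>v\<in>F \<union> G. (c' v + e' v) *\<^sub>R v)"
    by (simp add: scaleR_add_left sum.distrib)
  then show ?thesis
    unfolding pos_span_def using F G
    by (intro CollectI exI[of _ "F \<union> G"] exI[of _ "\<lambda>v. c' v + e' v"]) (auto simp: c'_def e'_def)
qed

lemma pos_span_sum:
  "finite F \<Longrightarrow> (\<And>v. v \<in> F \<Longrightarrow> f v \<in> pos_span A) \<Longrightarrow> sum f F \<in> pos_span A"
  by (induction F rule: finite_induct) (auto simp: pos_span_add)

lemma pos_span_minimal:
  assumes "B \<subseteq> pos_span A"
  shows "pos_span B \<subseteq> pos_span A"
proof
  fix y assume "y \<in> pos_span B"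
  then obtain F c where "finite F" "F \<subseteq> B" "\<forall>v\<in>F. 0 \<le> c v" and y: "y = (\<Sum>v\<in>F. c v *\<^sub>R v)"
    unfolding pos_span_def by blast
  then show "y \<in> pos_span A"
    using assms by (auto intro!: pos_span_sum pos_span_scaleR)
qed

lemma pos_span_subset_span: "pos_span A \<subseteq> span A"
  unfolding pos_span_def by (auto intro!: span_sum span_scale intro: span_base)

lemma pos_span_pair:
  "y \<in> pos_span {a, b} \<longleftrightarrow> (\<exists>c1 c2. 0 \<le> c1 \<and> 0 \<le> c2 \<and> y = c1 *\<^sub>R a + c2 *\<^sub>R b)"
proof
  assume "y \<in> pos_span {a, b}"
  then obtain F c where F: "F \<subseteq> {a, b}" "\<forall>v\<in>F. 0 \<le> c v" and y: "y = (\<Sum>v\<in>F. c v *\<^sub>R v)"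
    unfolding pos_span_def by blast
  define c' where "c' v = (if v \<in> F then c v else 0)" for v
  have "y = (\<Sum>v\<in>{a, b}. c' v *\<^sub>R v)"
    unfolding y c'_def using F(1) by (auto intro!: sum.mono_neutral_cong_left)
  then have "y = c' a *\<^sub>R a + (if a = b then 0 else c' b) *\<^sub>R b"
    by (cases "a = b") auto
  moreover have "0 \<le> c' v" for v
    using F(2) by (simp add: c'_def)
  ultimately show "\<exists>c1 c2. 0 \<le> c1 \<and> 0 \<le> c2 \<and> y = c1 *\<^sub>R a + c2 *\<^sub>R b"
    by (metis order_refl)
next
  assume "\<exists>c1 c2. 0 \<le> c1 \<and> 0 \<le> c2 \<and> y = c1 *\<^sub>R a + c2 *\<^sub>R b"
  moreover have "a \<in> pos_span {a, b}" "b \<in> pos_span {a, b}"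
    using pos_span_superset by blast+
  ultimately show "y \<in> pos_span {a, b}"
    using pos_span_add pos_span_scaleR by blast
qed

lemma pos_span_singleton: "y \<in> pos_span {a} \<longleftrightarrow> (\<exists>c\<ge>0. y = c *\<^sub>R a)"
  using pos_span_pair[of y a a]
  by (metis add.right_neutral add_nonneg_nonneg scaleR_add_left scaleR_zero_left order_refl insert_absorb2)

lemma pos_span_singleton_sym:
  assumes "x \<in> pos_span {u}" "x \<noteq> 0"
  shows "u \<in> pos_span {x}"
proof -
  obtain c where c: "0 \<le> c" "x = c *\<^sub>R u"
    using assms(1) by (auto simp: pos_span_singleton)
  with assms(2) have "u = (1 / c) *\<^sub>R x"
    by auto
  with c(1) show ?thesis
    unfolding pos_span_singleton by (intro exI[of _ "1 / c"]) simp
qed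

section \<open>Closed and biclosed sets\<close>

lemma closed_in_setI:
  "B \<subseteq> Y \<Longrightarrow> (\<And>\<alpha> \<beta> \<gamma>. \<alpha> \<in> B \<Longrightarrow> \<beta> \<in> B \<Longrightarrow> \<gamma> \<in> Y \<Longrightarrow> \<gamma> \<in> pos_span {\<alpha>, \<beta>} \<Longrightarrow> \<gamma> \<in> B)
   \<Longrightarrow> closed_in_set Y B"
  unfolding closed_in_set_def by blast

lemma closed_in_setD:
  "closed_in_set Y B \<Longrightarrow> \<alpha> \<in> B \<Longrightarrow> \<beta> \<in> B \<Longrightarrow> \<gamma> \<in> Y \<Longrightarrow> \<gamma> \<in> pos_span {\<alpha>, \<beta>} \<Longrightarrow> \<gamma> \<in> B"
  unfolding closed_in_set_def by blast

lemma closed_in_set_subset: "closed_in_set Y B \<Longrightarrow> B \<subseteq> Y"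
  unfolding closed_in_set_def by blast

lemma biclosed_in_set_iff:
  "biclosed_in_set Y B \<longleftrightarrow> closed_in_set Y B \<and> closed_in_set Y (Y - B)"
  unfolding biclosed_in_set_def coclosed_in_set_def by (auto dest: closed_in_set_subset)

lemma biclosed_in_set_Diff:
  assumes "biclosed_in_set X B"
  shows "biclosed_in_set X (X - B)"
proof -
  have "X - (X - B) = B"
    using assms by (auto simp: biclosed_in_set_iff dest: closed_in_set_subset)
  then show ?thesis
    using assms by (simp add: biclosed_in_set_iff)
qed

lemma closed_in_set_Int: "closed_in_set S B \<Longrightarrow> T \<subseteq> S \<Longrightarrow> closed_in_set T (B \<inter> T)"
  unfolding closed_in_set_def by blast

lemma biclosed_in_set_Int:
  assumes "biclosed_in_set S B" "T \<subseteq> S"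
  shows "biclosed_in_set T (B \<inter> T)"
proof -
  have "T - B \<inter> T = (S - B) \<inter> T"
    using assms(2) by blast
  then show ?thesis
    using assms closed_in_set_Int[of S _ T] by (simp add: biclosed_in_set_iff)
qed

lemma closed_in_set_if_local:
  assumes "B \<subseteq> Y"
    and "\<And>\<alpha> \<beta> \<gamma>. \<alpha> \<in> Y \<Longrightarrow> \<beta> \<in> Y \<Longrightarrow> \<gamma> \<in> Y \<Longrightarrow>
           \<exists>T. \<alpha> \<in> T \<and> \<beta> \<in> T \<and> \<gamma> \<in> T \<and> closed_in_set T (B \<inter> T)"
  shows "closed_in_set Y B"
proof (rule closed_in_setI[OF assms(1)])
  fix \<alpha> \<beta> \<gamma> assume \<alpha>\<beta>: "\<alpha> \<in> B" "\<beta> \<in> B" and \<gamma>: "\<gamma> \<in> Y" "\<gamma> \<in> pos_span {\<alpha>, \<beta>}"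
  have "\<alpha> \<in> Y" "\<beta> \<in> Y"
    using assms(1) \<alpha>\<beta> by auto
  then obtain T where "\<alpha> \<in> T" "\<beta> \<in> T" "\<gamma> \<in> T" and T: "closed_in_set T (B \<inter> T)"
    using assms(2)[OF _ _ \<gamma>(1)] by blast
  then have "\<gamma> \<in> B \<inter> T"
    using closed_in_setD[OF T _ _ _ \<gamma>(2)] \<alpha>\<beta> by simp
  then show "\<gamma> \<in> B" by blast
qed

lemma closed_in_set_insert:
  assumes "closed_in_set S C"
    and "\<And>a x. a \<in> insert d C \<Longrightarrow> x \<in> S \<Longrightarrow> x \<in> pos_span {d, a} \<Longrightarrow> x \<in> C"
  shows "closed_in_set (insert d S) (insert d C)"
proof (rule closed_in_setI)
  show "insert d C \<subseteq> insert d S"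
    using closed_in_set_subset[OF assms(1)] by blast
next
  fix \<alpha> \<beta> \<gamma> assume \<alpha>\<beta>: "\<alpha> \<in> insert d C" "\<beta> \<in> insert d C"
    and \<gamma>: "\<gamma> \<in> insert d S" "\<gamma> \<in> pos_span {\<alpha>, \<beta>}"
  consider "\<gamma> = d" | "\<gamma> \<in> S" "\<alpha> = d" | "\<gamma> \<in> S" "\<beta> = d" | "\<gamma> \<in> S" "\<alpha> \<in> C" "\<beta> \<in> C"
    using \<alpha>\<beta> \<gamma>(1) by blast
  then show "\<gamma> \<in> insert d C"
  proof cases
    case 2
    then show ?thesis using assms(2)[OF \<alpha>\<beta>(2)] \<gamma>(2) by simp
  next
    case 3
    then show ?thesis using assms(2)[OF \<alpha>\<beta>(1)] \<gamma>(2) by (simp add: insert_commute)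
  next
    case 4
    then show ?thesis using closed_in_setD[OF assms(1)] \<gamma>(2) by blast
  qed simp
qed

lemma closed_in_set_insert_outside:
  assumes "closed_in_set S C" and "\<And>a b. a \<in> C \<Longrightarrow> b \<in> C \<Longrightarrow> d \<notin> pos_span {a, b}"
  shows "closed_in_set (insert d S) C"
proof (rule closed_in_setI)
  show "C \<subseteq> insert d S"
    using closed_in_set_subset[OF assms(1)] by blast
next
  fix \<alpha> \<beta> \<gamma> assume "\<alpha> \<in> C" "\<beta> \<in> C" "\<gamma> \<in> insert d S" "\<gamma> \<in> pos_span {\<alpha>, \<beta>}"
  then show "\<gamma> \<in> C"
    using assms(2) closed_in_setD[OF assms(1)] by blast
qed

lemma biclosed_in_set_with_zero:
  assumes "0 \<in> X" "biclosed_in_set X B" "b \<in> B"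
  shows "B = X"
proof -
  have cl: "closed_in_set X B" and co: "closed_in_set X (X - B)"
    using assms(2) by (simp_all add: biclosed_in_set_iff)
  have "0 \<in> B"
    using closed_in_setD[OF cl assms(3) assms(3) assms(1)] by simp
  moreover have "0 \<in> X - B" if "y \<in> X - B" for y
    using closed_in_setD[OF co that that assms(1)] by simp
  ultimately show ?thesis
    using closed_in_set_subset[OF cl] by blast
qed

lemma bclosure_superset: "A \<subseteq> bclosure S A"
  unfolding bclosure_def by blast

lemma bclosure_least: "closed_in_set S C \<Longrightarrow> A \<subseteq> C \<Longrightarrow> bclosure S A \<subseteq> C"
  unfolding bclosure_def by (rule Inter_lower) simp

lemma closed_in_set_bclosure:
  assumes "A \<subseteq> S"
  shows "closed_in_set S (bclosure S A)"
proof (rule closed_in_setI)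
  show "bclosure S A \<subseteq> S"
    using assms by (intro bclosure_least) (auto intro: closed_in_setI)
next
  fix \<alpha> \<beta> \<gamma> assume "\<alpha> \<in> bclosure S A" "\<beta> \<in> bclosure S A" "\<gamma> \<in> S" "\<gamma> \<in> pos_span {\<alpha>, \<beta>}"
  then show "\<gamma> \<in> bclosure S A"
    unfolding bclosure_def by (blast intro: closed_in_setD)
qed

lemma bclosure_unique:
  assumes "closed_in_set S M" "A \<subseteq> M" "\<And>C. closed_in_set S C \<Longrightarrow> A \<subseteq> C \<Longrightarrow> M \<subseteq> C"
  shows "bclosure S A = M"
proof
  show "bclosure S A \<subseteq> M"
    using assms(1,2) by (rule bclosure_least)
  show "M \<subseteq> bclosure S A"
    unfolding bclosure_def using assms(3) by blast
qed

section \<open>Cones in a plane\<close>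

lemma strict_cone_not_collinear:
  assumes x: "x = s *\<^sub>R d + t *\<^sub>R a" and "0 < s" "0 < t"
    and "x \<notin> pos_span {a}" "d \<notin> pos_span {x}"
  shows "d \<notin> span {a}"
proof
  assume "d \<in> span {a}"
  then obtain c where c: "d = c *\<^sub>R a"
    by (auto simp: span_singleton)
  then have xa: "x = (s * c + t) *\<^sub>R a"
    using x by (simp add: algebra_simps)
  show False
  proof (cases "0 \<le> s * c + t")
    case True
    with xa assms(4) show False
      by (auto simp: pos_span_singleton)
  next
    case False
    with \<open>0 < t\<close> have "s * c < 0"
      by linarith
    with \<open>0 < s\<close> have "c < 0"
      by (simp add: mult_less_0_iff)
    have "d = (c / (s * c + t)) *\<^sub>R x"
      using xa False c by simp
    moreover have "0 \<le> c / (s * c + t)"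
      using \<open>c < 0\<close> False by (simp add: divide_nonpos_neg)
    ultimately show False
      using assms(5) by (auto simp: pos_span_singleton)
  qed
qed

lemma pos_span_pair_strict:
  assumes "x \<in> pos_span {d, a}" "x \<notin> pos_span {a}" "d \<notin> pos_span {x}"
  obtains s t where "0 < s" "0 < t" "x = s *\<^sub>R d + t *\<^sub>R a" "a \<noteq> 0" "d \<notin> span {a}"
proof -
  obtain s t where st: "0 \<le> s" "0 \<le> t" and x: "x = s *\<^sub>R d + t *\<^sub>R a"
    using assms(1) unfolding pos_span_pair by blast
  have s: "0 < s"
  proof (rule ccontr)
    assume "\<not> 0 < s"
    with st x have "x = t *\<^sub>R a"
      by simp
    with st(2) assms(2) show False
      by (auto simp: pos_span_singleton)
  qed
  have "t *\<^sub>R a \<noteq> 0"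
  proof
    assume "t *\<^sub>R a = 0"
    with s x have "d = (1 / s) *\<^sub>R x"
      by simp
    with s have "d \<in> pos_span {x}"
      unfolding pos_span_singleton by (intro exI[of _ "1 / s"]) simp
    with assms(3) show False ..
  qed
  then have t: "0 < t" and a: "a \<noteq> 0"
    using st(2) by auto
  with s x assms(2,3) show ?thesis
    using that strict_cone_not_collinear by blast
qed

lemma pos_span_pair_if_det_nonneg:
  assumes v: "v = v1 *\<^sub>R h + v2 *\<^sub>R k" and w: "w = w1 *\<^sub>R h + w2 *\<^sub>R k"
    and "0 < w2" "0 \<le> v2" "v2 * w1 \<le> v1 * w2"
  shows "v \<in> pos_span {h, w}"
proof -
  have "((v1 * w2 - v2 * w1) / w2) *\<^sub>R h + (v2 / w2) *\<^sub>R w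
      = ((v1 * w2 - v2 * w1) / w2 + v2 / w2 * w1) *\<^sub>R h + (v2 / w2 * w2) *\<^sub>R k"
    by (simp add: w algebra_simps)
  also have "\<dots> = v"
    using \<open>0 < w2\<close> by (simp add: v field_simps)
  finally have "v = ((v1 * w2 - v2 * w1) / w2) *\<^sub>R h + (v2 / w2) *\<^sub>R w" ..
  moreover have "0 \<le> (v1 * w2 - v2 * w1) / w2" "0 \<le> v2 / w2"
    using assms(3-5) by simp_all
  ultimately show ?thesis
    unfolding pos_span_pair by blast
qed

text \<open>With \<open>h\<^sub>1, h\<^sub>2\<close> spanning a cone that contains \<open>d\<close> and \<open>a\<close>, and \<open>d\<close> on the
  \<open>h\<^sub>1\<close>-side of \<open>a\<close>, the four rays occur in the order \<open>h\<^sub>1, d, x, a\<close>.\<close>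

lemma cone_between_oriented:
  assumes d: "d = d1 *\<^sub>R h1 + d2 *\<^sub>R h2" and a: "a = a1 *\<^sub>R h1 + a2 *\<^sub>R h2"
    and "0 \<le> d2" "0 \<le> a1" "0 \<le> a2" "0 < s" "0 < t" and x: "x = s *\<^sub>R d + t *\<^sub>R a"
    and orient: "d2 * a1 \<le> d1 * a2" and "a \<noteq> 0" "d \<notin> span {a}"
  shows "d \<in> pos_span {h1, x} \<and> x \<in> pos_span {h1, a}"
proof -
  have "0 < a2"
  proof (rule ccontr)
    assume "\<not> 0 < a2"
    with \<open>0 \<le> a2\<close> have "a2 = 0"
      by simp
    with a \<open>a \<noteq> 0\<close> have "a1 \<noteq> 0"
      by auto
    with \<open>a2 = 0\<close> orient \<open>0 \<le> d2\<close> \<open>0 \<le> a1\<close> have "d2 = 0"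
      by (simp add: mult_le_0_iff)
    with a d \<open>a2 = 0\<close> \<open>a1 \<noteq> 0\<close> have "d = (d1 / a1) *\<^sub>R a"
      by simp
    with \<open>d \<notin> span {a}\<close> show False
      by (metis span_base span_scale singletonI)
  qed
  define x1 where "x1 = s * d1 + t * a1"
  define x2 where "x2 = s * d2 + t * a2"
  have x': "x = x1 *\<^sub>R h1 + x2 *\<^sub>R h2"
    unfolding x d a x1_def x2_def by (simp add: algebra_simps)
  have "0 < x2"
    unfolding x2_def using \<open>0 \<le> d2\<close> \<open>0 < s\<close> \<open>0 < t\<close> \<open>0 < a2\<close> by (simp add: add_nonneg_pos)
  have "t * (d2 * a1) \<le> t * (d1 * a2)" "s * (d2 * a1) \<le> s * (d1 * a2)"
    using orient \<open>0 < s\<close> \<open>0 < t\<close> by simp_all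
  then have "d2 * x1 \<le> d1 * x2" "x2 * a1 \<le> x1 * a2"
    unfolding x1_def x2_def by (simp_all add: algebra_simps)
  then show ?thesis
    using pos_span_pair_if_det_nonneg[OF d x'] pos_span_pair_if_det_nonneg[OF x' a]
      \<open>0 < x2\<close> \<open>0 < a2\<close> \<open>0 \<le> d2\<close> by simp
qed

lemma cone_between_fundamental:
  assumes "d \<in> pos_span {h1, h2}" "a \<in> pos_span {h1, h2}"
    and "0 < s" "0 < t" "x = s *\<^sub>R d + t *\<^sub>R a" "a \<noteq> 0" "d \<notin> span {a}"
  shows "\<exists>h\<in>{h1, h2}. d \<in> pos_span {h, x} \<and> x \<in> pos_span {h, a}"
proof -
  obtain d1 d2 where d: "0 \<le> d1" "0 \<le> d2" "d = d1 *\<^sub>R h1 + d2 *\<^sub>R h2"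
    using assms(1) unfolding pos_span_pair by blast
  obtain a1 a2 where a: "0 \<le> a1" "0 \<le> a2" "a = a1 *\<^sub>R h1 + a2 *\<^sub>R h2"
    using assms(2) unfolding pos_span_pair by blast
  consider "d2 * a1 \<le> d1 * a2" | "d1 * a2 \<le> d2 * a1"
    by linarith
  then show ?thesis
  proof cases
    case 1
    then show ?thesis
      using cone_between_oriented[OF d(3) a(3) d(2) a(1,2) assms(3-5) _ assms(6,7)] by blast
  next
    case 2
    have "d = d2 *\<^sub>R h2 + d1 *\<^sub>R h1" "a = a2 *\<^sub>R h2 + a1 *\<^sub>R h1"
      using d(3) a(3) by (simp_all add: add.commute)
    from cone_between_oriented[OF this d(1) a(2,1) assms(3-5) _ assms(6,7)] 2
    show ?thesis
      by (simp add: mult.commute)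
  qed
qed

lemma two_dim_linear_subset_span_pair:
  assumes "d \<in> X" "a \<in> X" "a \<noteq> 0" "d \<notin> span {a}"
  shows "two_dim_linear_subset X (X \<inter> span {d, a})"
proof -
  have "d \<noteq> a"
    using assms(4) span_base[of a "{a}"] by auto
  with assms(3,4) have "independent {d, a}"
    by (simp add: independent_insert)
  have "span (X \<inter> span {d, a}) = span {d, a}"
  proof
    show "span (X \<inter> span {d, a}) \<subseteq> span {d, a}"
      by (simp add: span_minimal)
    show "span {d, a} \<subseteq> span (X \<inter> span {d, a})"
      using assms(1,2) by (intro span_mono) (auto intro: span_base)
  qed
  then have "dim (X \<inter> span {d, a}) = dim {d, a}"
    by (metis dim_span)
  also have "\<dots> = 2"
    using dim_eq_card_independent[OF \<open>independent {d, a}\<close>] \<open>d \<noteq> a\<close> by simp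
  finally show ?thesis
    unfolding two_dim_linear_subset_def by (blast intro: subspace_span)
qed

lemma full_subset_mem:
  "full_subset X F \<Longrightarrow> \<alpha> \<in> F \<Longrightarrow> \<beta> \<in> F \<Longrightarrow> y \<in> X \<Longrightarrow> y \<in> span {\<alpha>, \<beta>} \<Longrightarrow> y \<in> F"
  unfolding full_subset_def by blast

lemma pos_span_pair_Int_full:
  assumes "full_subset X F" "u \<in> F" "d \<in> F" "v \<in> X" "d \<in> pos_span {u, v}"
  shows "d \<in> pos_span ({u, v} \<inter> F)"
proof -
  obtain c1 c2 where c: "0 \<le> c1" "0 \<le> c2" "d = c1 *\<^sub>R u + c2 *\<^sub>R v"
    using assms(5) unfolding pos_span_pair by blast
  show ?thesis
  proof (cases "c2 = 0")
    case True
    with c have "d \<in> pos_span {u}"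
      unfolding pos_span_singleton by auto
    then show ?thesis
      using assms(2) pos_span_mono[of "{u}" "{u, v} \<inter> F"] by blast
  next
    case False
    with c have "v = (1 / c2) *\<^sub>R d - (c1 / c2) *\<^sub>R u"
      by (simp add: algebra_simps)
    then have "v \<in> span {d, u}"
      by (simp add: span_diff span_scale span_base)
    then have "v \<in> F"
      using full_subset_mem[OF assms(1,3,2,4)] by blast
    then show ?thesis
      using assms(2,5) by (simp add: insert_absorb)
  qed
qed

section \<open>Suitable orderings\<close>

locale suitably_ordered =
  fixes X :: "'v::euclidean_space set" and r :: "'v \<Rightarrow> nat"
  assumes fundamental_vectors_exist:
      "\<And>Y. two_dim_linear_subset X Y \<Longrightarrow> \<exists>\<alpha> \<beta>. fundamental_vectors Y \<alpha> \<beta>"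
    and suitable: "suitable_ordering X r"
begin

abbreviation seg :: "nat \<Rightarrow> 'v set" where
  "seg i \<equiv> initial_segment X r i"

lemma mem_seg: "y \<in> seg i \<longleftrightarrow> y \<in> X \<and> r y < i"
  by (simp add: initial_segment_def)

lemma seg_subset: "seg i \<subseteq> X"
  by (simp add: initial_segment_def)

lemma seg_mono: "i \<le> j \<Longrightarrow> seg i \<subseteq> seg j"
  by (auto simp: mem_seg)

lemma seg_Suc: "d \<in> X \<Longrightarrow> r d = i \<Longrightarrow> seg (Suc i) = insert d (seg i)"
  using suitable unfolding suitable_ordering_def inj_on_def by (auto simp: mem_seg less_Suc_eq)

lemma seg_Suc_eq: "i \<notin> r ` X \<Longrightarrow> seg (Suc i) = seg i"
  by (auto simp: mem_seg less_Suc_eq)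

lemma ex_seg_containing:
  "\<alpha> \<in> X \<Longrightarrow> \<beta> \<in> X \<Longrightarrow> \<gamma> \<in> X \<Longrightarrow> \<exists>n. \<alpha> \<in> seg n \<and> \<beta> \<in> seg n \<and> \<gamma> \<in> seg n"
  by (intro exI[of _ "Suc (r \<alpha> + r \<beta> + r \<gamma>)"]) (auto simp: mem_seg)

lemma rank_fundamental_less:
  assumes "two_dim_linear_subset X Y" "fundamental_vectors Y h1 h2"
    and "x \<in> Y" "x \<in> pos_span (Y - {x})"
  shows "r h1 < r x \<and> r h2 < r x"
proof -
  have "x \<noteq> h1" "x \<noteq> h2"
    using assms(2,4) unfolding fundamental_vectors_def by auto
  moreover have "\<And>\<gamma>. \<gamma> \<in> Y - {h1, h2} \<Longrightarrow> r h1 < r \<gamma> \<and> r h2 < r \<gamma>"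
    using suitable assms(1,2) unfolding suitable_ordering_def by blast
  ultimately show ?thesis
    using assms(3) by blast
qed

text \<open>The witness is a fundamental vector of the plane through \<open>d\<close> and \<open>a\<close>; suitability of
  the ordering puts it before \<open>x\<close>.\<close>

lemma earlier_witness:
  assumes "d \<in> X" "a \<in> X" "x \<in> X" "r x < r d" "x \<in> pos_span {d, a}" "x \<notin> pos_span {a}"
  shows "\<exists>w\<in>X. r w < r d \<and> d \<in> pos_span {w, x} \<and> x \<in> pos_span {w, a}"
proof (cases "d \<in> pos_span {x}")
  case True
  moreover have "x \<in> pos_span {x, a}"
    using pos_span_superset by blast
  ultimately show ?thesis
    using assms(3,4) by auto
next
  case False
  obtain s t where st: "0 < s" "0 < t" "x = s *\<^sub>R d + t *\<^sub>R a" and a: "a \<noteq> 0" "d \<notin> span {a}"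
    using pos_span_pair_strict[OF assms(5,6) False] by blast
  define Y where "Y = X \<inter> span {d, a}"
  have Y: "two_dim_linear_subset X Y"
    unfolding Y_def using two_dim_linear_subset_span_pair[OF assms(1,2) a] .
  then obtain h1 h2 where h: "fundamental_vectors Y h1 h2"
    using fundamental_vectors_exist by blast
  have "d \<in> Y" "a \<in> Y" "x \<in> Y"
    using assms(1-3,5) pos_span_subset_span by (auto simp: Y_def span_base)
  moreover have "x \<noteq> d" "x \<noteq> a"
    using False assms(6) pos_span_superset by blast+
  ultimately have "x \<in> pos_span (Y - {x})"
    using assms(5) pos_span_mono[of "{d, a}" "Y - {x}"] by blast
  then have "r h1 < r x" "r h2 < r x"
    using rank_fundamental_less[OF Y h \<open>x \<in> Y\<close>] by simp_all
  moreover have "h1 \<in> X" "h2 \<in> X"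
    and cone: "d \<in> pos_span {h1, h2}" "a \<in> pos_span {h1, h2}"
    using h \<open>d \<in> Y\<close> \<open>a \<in> Y\<close> unfolding fundamental_vectors_def Y_def by auto
  moreover obtain h where "h \<in> {h1, h2}" "d \<in> pos_span {h, x}" "x \<in> pos_span {h, a}"
    using cone_between_fundamental[OF cone st a] by blast
  ultimately show ?thesis
    using assms(4) by (intro bexI[of _ h]) auto
qed

lemma clean_separation:
  assumes "biclosed_in_set (seg i) K" "\<alpha> \<in> seg i" "\<beta> \<in> seg i" "\<gamma> \<in> seg i"
  obtains F where "full_subset X F" "\<alpha> \<in> F" "\<beta> \<in> F" "\<gamma> \<in> F"
    "pos_span (K \<inter> F) \<inter> pos_span ((seg i - K) \<inter> F) = {0}"
proof -
  obtain F where F: "full_subset X F" "\<alpha> \<in> F" "\<beta> \<in> F" "\<gamma> \<in> F" and "clean (F \<inter> seg i)"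
    using suitable assms(2-4) unfolding suitable_ordering_def by meson
  moreover have "biclosed_in_set (F \<inter> seg i) (K \<inter> (F \<inter> seg i))"
    using biclosed_in_set_Int[OF assms(1)] by blast
  ultimately have "weakly_separable (F \<inter> seg i) (K \<inter> (F \<inter> seg i))"
    unfolding clean_def by blast
  moreover have "K \<inter> (F \<inter> seg i) = K \<inter> F" "F \<inter> seg i - K \<inter> (F \<inter> seg i) = (seg i - K) \<inter> F"
    using assms(1) by (auto simp: biclosed_in_set_iff dest: closed_in_set_subset)
  ultimately show ?thesis
    using that F unfolding weakly_separable_def by simp
qed

end

section \<open>Closures of unions of biclosed sets\<close>

locale biclosed_family = suitably_ordered X r
  for X :: "'v::euclidean_space set" and r :: "'v \<Rightarrow> nat" +
  fixes \<X> :: "'v set set"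
  assumes biclosed_members: "\<And>B. B \<in> \<X> \<Longrightarrow> biclosed_in_set X B"
begin

lemma Union_subset: "\<Union>\<X> \<subseteq> X"
  using biclosed_members by (auto simp: biclosed_in_set_iff dest: closed_in_set_subset)

definition seg_closure :: "nat \<Rightarrow> 'v set" where
  "seg_closure i = bclosure (seg i) (\<Union>\<X> \<inter> seg i)"

lemma closed_seg_closure: "closed_in_set (seg i) (seg_closure i)"
  unfolding seg_closure_def by (rule closed_in_set_bclosure) blast

lemma seg_closure_subset: "seg_closure i \<subseteq> seg i"
  using closed_in_set_subset[OF closed_seg_closure] .

lemma member_Int_seg_subset:
  assumes "B \<in> \<X>"
  shows "B \<inter> seg i \<subseteq> seg_closure i"
proof -
  have "B \<inter> seg i \<subseteq> \<Union>\<X> \<inter> seg i"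
    using assms by blast
  then show ?thesis
    unfolding seg_closure_def using bclosure_superset by (rule order_trans)
qed

lemma seg_closure_least:
  assumes "seg i \<subseteq> T" "closed_in_set T C" "\<Union>\<X> \<inter> T \<subseteq> C"
  shows "seg_closure i \<subseteq> C"
proof -
  have "seg_closure i \<subseteq> C \<inter> seg i"
    unfolding seg_closure_def
    using assms closed_in_set_Int[OF assms(2,1)] by (intro bclosure_least) auto
  then show ?thesis
    by blast
qed

lemma Union_eq_if_zero_mem:
  assumes "0 \<in> X" "y \<in> seg_closure i"
  shows "\<Union>\<X> = X"
proof -
  have "\<Union>\<X> \<inter> seg i \<noteq> {}"
  proof
    assume "\<Union>\<X> \<inter> seg i = {}"
    then have "seg_closure i \<subseteq> {}"
      by (intro seg_closure_least[OF order_refl]) (auto intro: closed_in_setI)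
    with assms(2) show False
      by blast
  qed
  then obtain B b where "B \<in> \<X>" "b \<in> B"
    by blast
  then have "B = X"
    using biclosed_in_set_with_zero[OF assms(1) biclosed_members] by blast
  with \<open>B \<in> \<X>\<close> show ?thesis
    using Union_subset by blast
qed

text \<open>The vector \<open>d\<close> of rank \<open>i\<close> enters the closure at stage \<open>i + 1\<close> exactly when
  it is generated.\<close>

definition generated :: "nat \<Rightarrow> 'v \<Rightarrow> bool" where
  "generated i d \<longleftrightarrow> d \<in> \<Union>\<X> \<or> (\<exists>p\<in>seg_closure i. \<exists>q\<in>seg_closure i. d \<in> pos_span {p, q})"

context
  fixes i d
  assumes d_in_X: "d \<in> X" and rank_d: "r d = i"
    and stage_biclosed: "biclosed_in_set (seg i) (seg_closure i)"
begin

lemma coclosed_seg_closure: "closed_in_set (seg i) (seg i - seg_closure i)"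
  using stage_biclosed by (simp add: biclosed_in_set_iff)

lemma d_notin_seg: "d \<notin> seg i"
  using rank_d by (simp add: mem_seg)

lemma mem_seg_iff_rank_less: "y \<in> seg i \<longleftrightarrow> y \<in> X \<and> r y < r d"
  using rank_d by (simp add: mem_seg)

lemma member_cone_absorbed:
  assumes "B \<in> \<X>" "d \<in> B" "a \<in> insert d (seg_closure i)" "x \<in> seg i" "x \<in> pos_span {d, a}"
  shows "x \<in> seg_closure i"
proof (rule ccontr)
  assume "x \<notin> seg_closure i"
  have B: "closed_in_set X B" "closed_in_set X (X - B)"
    using biclosed_members[OF assms(1)] by (simp_all add: biclosed_in_set_iff)
  have "x \<in> X"
    using assms(4) seg_subset by blast
  have "x \<notin> B"
    using member_Int_seg_subset[OF assms(1)] assms(4) \<open>x \<notin> seg_closure i\<close> by blast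
  show False
  proof (cases "a = d")
    case True
    then show False
      using closed_in_setD[OF B(1) assms(2) assms(2) \<open>x \<in> X\<close>] assms(5) \<open>x \<notin> B\<close> by simp
  next
    case False
    with assms(3) have "a \<in> seg_closure i"
      by blast
    then have "a \<in> X"
      using seg_closure_subset seg_subset by blast
    have "x \<notin> pos_span {a}"
      using closed_in_setD[OF closed_seg_closure \<open>a \<in> seg_closure i\<close> \<open>a \<in> seg_closure i\<close> assms(4)] \<open>x \<notin> seg_closure i\<close> by auto
    then obtain w where w: "w \<in> X" "r w < r d" "d \<in> pos_span {w, x}" "x \<in> pos_span {w, a}"
      using earlier_witness[OF d_in_X \<open>a \<in> X\<close> \<open>x \<in> X\<close>] assms(4,5)
      by (auto simp: mem_seg_iff_rank_less)
    show False
    proof (cases "w \<in> B")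
      case True
      have "w \<in> seg i"
        using w(1,2) by (simp add: mem_seg_iff_rank_less)
      with True have "w \<in> seg_closure i"
        using member_Int_seg_subset[OF assms(1)] by blast
      then show False
        using closed_in_setD[OF closed_seg_closure _ \<open>a \<in> seg_closure i\<close> assms(4) w(4)] \<open>x \<notin> seg_closure i\<close> by blast
    next
      case False
      then have "d \<in> X - B"
        using closed_in_setD[OF B(2) _ _ d_in_X w(3)] w(1) \<open>x \<in> X\<close> \<open>x \<notin> B\<close> by blast
      with assms(2) show False
        by blast
    qed
  qed
qed

lemma generated_cone_absorbed:
  assumes "p \<in> seg_closure i" "q \<in> seg_closure i" "d \<in> pos_span {p, q}" "a \<in> insert d (seg_closure i)" "x \<in> seg i" "x \<in> pos_span {d, a}"
  shows "x \<in> seg_closure i"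
proof (cases "a = d")
  case True
  then have "x \<in> pos_span {p, q}"
    using assms(3,6) pos_span_minimal[of "{d}" "{p, q}"] by auto
  then show ?thesis
    using closed_in_setD[OF closed_seg_closure assms(1,2,5)] by blast
next
  case False
  with assms(4) have "a \<in> seg_closure i"
    by blast
  then obtain F where F: "full_subset X F" "p \<in> F" "q \<in> F" "a \<in> F"
    and sep: "pos_span (seg_closure i \<inter> F) \<inter> pos_span ((seg i - seg_closure i) \<inter> F) = {0}"
    using clean_separation[OF stage_biclosed] assms(1,2) seg_closure_subset by blast
  have "d \<in> F"
    using full_subset_mem[OF F(1-3) d_in_X] assms(3) pos_span_subset_span by blast
  then have "x \<in> F"
    using full_subset_mem[OF F(1) _ F(4)] assms(5,6) seg_subset pos_span_subset_span by blast
  have "pos_span {p, q} \<subseteq> pos_span (seg_closure i \<inter> F)"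
    using assms(1,2) F(2,3) by (intro pos_span_mono) blast
  with assms(3) \<open>a \<in> seg_closure i\<close> F(4) have "{d, a} \<subseteq> pos_span (seg_closure i \<inter> F)"
    using pos_span_superset by blast
  with assms(6) have x_K: "x \<in> pos_span (seg_closure i \<inter> F)"
    using pos_span_minimal by blast
  show ?thesis
  proof (rule ccontr)
    assume "x \<notin> seg_closure i"
    with \<open>x \<in> F\<close> assms(5) have "x \<in> (seg i - seg_closure i) \<inter> F"
      by blast
    then have "x \<in> pos_span ((seg i - seg_closure i) \<inter> F)"
      by (rule pos_span_superset[THEN subsetD])
    with x_K sep have "x = 0"
      by (metis IntI singletonD)
    with \<open>x \<notin> seg_closure i\<close> show False
      using closed_in_setD[OF closed_seg_closure \<open>a \<in> seg_closure i\<close> \<open>a \<in> seg_closure i\<close> assms(5)] by simp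
  qed
qed

lemma generated_closed:
  assumes "generated i d"
  shows "closed_in_set (insert d (seg i)) (insert d (seg_closure i))"
  using closed_seg_closure
proof (rule closed_in_set_insert)
  fix a x assume "a \<in> insert d (seg_closure i)" "x \<in> seg i" "x \<in> pos_span {d, a}"
  with assms show "x \<in> seg_closure i"
    unfolding generated_def using member_cone_absorbed generated_cone_absorbed by blast
qed

lemma member_avoids_complement_cone:
  assumes "B \<in> \<X>" "d \<in> B" "u \<in> seg i - seg_closure i" "v \<in> seg i - seg_closure i"
  shows "d \<notin> pos_span {u, v}"
proof
  assume "d \<in> pos_span {u, v}"
  moreover have "u \<in> X - B" "v \<in> X - B"
    using member_Int_seg_subset[OF assms(1)] assms(3,4) seg_subset by blast+
  ultimately have "d \<in> X - B"
    using biclosed_members[OF assms(1)] closed_in_setD[of X "X - B" u v d] d_in_X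
    by (simp add: biclosed_in_set_iff)
  with assms(2) show False
    by blast
qed

text \<open>A full subset containing \<open>p, q, u\<close> also contains \<open>d\<close> and \<open>v\<close>, and its cleanness
  separates the two cones.\<close>

lemma cone_avoids_complement_cone:
  assumes "p \<in> seg_closure i" "q \<in> seg_closure i" "d \<in> pos_span {p, q}" "d \<noteq> 0"
    and uv: "u \<in> seg i - seg_closure i" "v \<in> seg i - seg_closure i"
  shows "d \<notin> pos_span {u, v}"
proof
  assume d_uv: "d \<in> pos_span {u, v}"
  obtain F where F: "full_subset X F" "p \<in> F" "q \<in> F" "u \<in> F"
    and sep: "pos_span (seg_closure i \<inter> F) \<inter> pos_span ((seg i - seg_closure i) \<inter> F) = {0}"
    using clean_separation[OF stage_biclosed] assms(1,2) uv(1) seg_closure_subset by blast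
  have "d \<in> F"
    using full_subset_mem[OF F(1-3) d_in_X] assms(3) pos_span_subset_span by blast
  have "v \<in> X"
    using uv(2) seg_subset by blast
  have "d \<in> pos_span ({u, v} \<inter> F)"
    using pos_span_pair_Int_full[OF F(1,4) \<open>d \<in> F\<close> \<open>v \<in> X\<close> d_uv] .
  moreover have "{u, v} \<inter> F \<subseteq> (seg i - seg_closure i) \<inter> F"
    using uv by blast
  ultimately have "d \<in> pos_span ((seg i - seg_closure i) \<inter> F)"
    using pos_span_mono by blast
  moreover have "d \<in> pos_span (seg_closure i \<inter> F)"
    using assms(1-3) F(2,3) pos_span_mono[of "{p, q}" "seg_closure i \<inter> F"] by blast
  ultimately show False
    using sep assms(4) by blast
qed

lemma generated_coclosed:
  assumes "generated i d"
  shows "closed_in_set (insert d (seg i)) (seg i - seg_closure i)"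
  using coclosed_seg_closure
proof (rule closed_in_set_insert_outside)
  fix u v assume uv: "u \<in> seg i - seg_closure i" "v \<in> seg i - seg_closure i"
  show "d \<notin> pos_span {u, v}"
  proof (cases "d \<in> \<Union>\<X>")
    case True
    then show ?thesis
      using member_avoids_complement_cone uv by blast
  next
    case False
    with assms obtain p q where pq: "p \<in> seg_closure i" "q \<in> seg_closure i" "d \<in> pos_span {p, q}"
      unfolding generated_def by blast
    with False d_in_X have "d \<noteq> 0"
      using Union_eq_if_zero_mem by blast
    with pq show ?thesis
      using cone_avoids_complement_cone uv by blast
  qed
qed

lemma not_generated_closed:
  assumes "\<not> generated i d"
  shows "closed_in_set (insert d (seg i)) (seg_closure i)"
  using closed_seg_closure
proof (rule closed_in_set_insert_outside)
  show "d \<notin> pos_span {a, b}" if "a \<in> seg_closure i" "b \<in> seg_closure i" for a b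
    using assms that unfolding generated_def by blast
qed

lemma zero_notin_seg_closure:
  assumes "\<not> generated i d"
  shows "0 \<notin> seg_closure i"
proof
  assume "0 \<in> seg_closure i"
  moreover from this have "0 \<in> X"
    using seg_closure_subset seg_subset by blast
  ultimately have "\<Union>\<X> = X"
    using Union_eq_if_zero_mem by blast
  with assms d_in_X show False
    unfolding generated_def by blast
qed

lemma not_generated_cone_avoids_seg:
  assumes "\<not> generated i d" and u: "u \<in> seg i - seg_closure i"
    and x: "x \<in> seg i" "x \<in> pos_span {d, u}"
  shows "x \<in> seg i - seg_closure i"
proof (rule ccontr)
  assume "x \<notin> seg i - seg_closure i"
  with x(1) have "x \<in> seg_closure i"
    by blast
  with assms(1) have "x \<noteq> 0"
    using zero_notin_seg_closure by blast
  have "x \<in> X" "u \<in> X"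
    using x(1) u seg_subset by blast+
  show False
  proof (cases "x \<in> pos_span {u}")
    case True
    with \<open>x \<noteq> 0\<close> have "u \<in> pos_span {x, x}"
      using pos_span_singleton_sym by simp
    then have "u \<in> seg_closure i"
      using closed_in_setD[OF closed_seg_closure \<open>x \<in> seg_closure i\<close> \<open>x \<in> seg_closure i\<close>] u by blast
    with u show False
      by blast
  next
    case False
    then obtain w where w: "w \<in> X" "r w < r d" "d \<in> pos_span {w, x}" "x \<in> pos_span {w, u}"
      using earlier_witness[OF d_in_X \<open>u \<in> X\<close> \<open>x \<in> X\<close>] x
      by (auto simp: mem_seg_iff_rank_less)
    then have "w \<in> seg i"
      by (simp add: mem_seg_iff_rank_less)
    show False
    proof (cases "w \<in> seg_closure i")
      case True
      with assms(1) w(3) \<open>x \<in> seg_closure i\<close> show False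
        unfolding generated_def by blast
    next
      case False
      then have "x \<in> seg i - seg_closure i"
        using closed_in_setD[OF coclosed_seg_closure _ u x(1) w(4)] \<open>w \<in> seg i\<close> by blast
      with \<open>x \<in> seg_closure i\<close> show False
        by blast
    qed
  qed
qed

lemma not_generated_cone_avoids:
  assumes "\<not> generated i d" "u \<in> insert d (seg i - seg_closure i)" "x \<in> seg i" "x \<in> pos_span {d, u}"
  shows "x \<in> seg i - seg_closure i"
proof (cases "u = d")
  case True
  show ?thesis
  proof (rule ccontr)
    assume "x \<notin> seg i - seg_closure i"
    with assms(3) have "x \<in> seg_closure i"
      by blast
    moreover from this assms(1) have "x \<noteq> 0"
      using zero_notin_seg_closure by blast
    with True assms(4) have "d \<in> pos_span {x, x}"
      using pos_span_singleton_sym by simp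
    ultimately show False
      using assms(1) unfolding generated_def by blast
  qed
next
  case False
  with assms show ?thesis
    using not_generated_cone_avoids_seg by blast
qed

lemma not_generated_coclosed:
  assumes "\<not> generated i d"
  shows "closed_in_set (insert d (seg i)) (insert d (seg i - seg_closure i))"
  using coclosed_seg_closure not_generated_cone_avoids[OF assms]
  by (rule closed_in_set_insert)

lemma seg_closure_Suc_generated:
  assumes "generated i d"
  shows "seg_closure (Suc i) = insert d (seg_closure i)"
  unfolding seg_closure_def[of "Suc i"] seg_Suc[OF d_in_X rank_d]
proof (rule bclosure_unique)
  show "closed_in_set (insert d (seg i)) (insert d (seg_closure i))"
    using generated_closed[OF assms] .
  show "\<Union>\<X> \<inter> insert d (seg i) \<subseteq> insert d (seg_closure i)"
    unfolding seg_closure_def by (auto intro: bclosure_superset[THEN subsetD])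
  fix C assume C: "closed_in_set (insert d (seg i)) C" "\<Union>\<X> \<inter> insert d (seg i) \<subseteq> C"
  then have "seg_closure i \<subseteq> C"
    using seg_closure_least[OF subset_insertI] by blast
  moreover from this assms C have "d \<in> C"
    using closed_in_setD[OF C(1)] unfolding generated_def by blast
  ultimately show "insert d (seg_closure i) \<subseteq> C"
    by blast
qed

lemma seg_closure_Suc_not_generated:
  assumes "\<not> generated i d"
  shows "seg_closure (Suc i) = seg_closure i"
  unfolding seg_closure_def[of "Suc i"] seg_Suc[OF d_in_X rank_d]
proof (rule bclosure_unique)
  show "closed_in_set (insert d (seg i)) (seg_closure i)"
    using not_generated_closed[OF assms] .
  show "\<Union>\<X> \<inter> insert d (seg i) \<subseteq> seg_closure i"
    using assms member_Int_seg_subset unfolding generated_def by blast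
qed (rule seg_closure_least[OF subset_insertI])

lemma seg_closure_Suc_step:
  "biclosed_in_set (seg (Suc i)) (seg_closure (Suc i)) \<and> seg_closure (Suc i) \<inter> seg i = seg_closure i"
proof (cases "generated i d")
  case True
  have "insert d (seg i) - insert d (seg_closure i) = seg i - seg_closure i"
    using d_notin_seg by blast
  then show ?thesis
    using generated_closed[OF True] generated_coclosed[OF True] seg_closure_Suc_generated[OF True]
      seg_Suc[OF d_in_X rank_d] d_notin_seg seg_closure_subset[of i]
    by (auto simp: biclosed_in_set_iff)
next
  case False
  have "insert d (seg i) - seg_closure i = insert d (seg i - seg_closure i)"
    using d_notin_seg seg_closure_subset by blast
  then show ?thesis
    using not_generated_closed[OF False] not_generated_coclosed[OF False]
      seg_closure_Suc_not_generated[OF False] seg_Suc[OF d_in_X rank_d] seg_closure_subset[of i]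
    by (auto simp: biclosed_in_set_iff)
qed

end

lemma seg_closure_Suc:
  assumes "biclosed_in_set (seg i) (seg_closure i)"
  shows "biclosed_in_set (seg (Suc i)) (seg_closure (Suc i))
    \<and> seg_closure (Suc i) \<inter> seg i = seg_closure i"
proof (cases "i \<in> r ` X")
  case True
  then obtain d where "d \<in> X" "r d = i"
    by blast
  then show ?thesis
    using seg_closure_Suc_step assms by blast
next
  case False
  then have "seg (Suc i) = seg i"
    by (rule seg_Suc_eq)
  then show ?thesis
    using assms seg_closure_subset by (simp add: seg_closure_def Int_absorb2)
qed

lemma biclosed_seg_closure: "biclosed_in_set (seg i) (seg_closure i)"
proof (induction i)
  case 0
  have "seg 0 = {}"
    by (simp add: initial_segment_def)
  then show ?case
    using seg_closure_subset[of 0] by (auto simp: biclosed_in_set_iff intro: closed_in_setI)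
next
  case (Suc i)
  then show ?case
    using seg_closure_Suc by blast
qed

lemma seg_closure_Int_seg: "i \<le> j \<Longrightarrow> seg_closure j \<inter> seg i = seg_closure i"
proof (induction j rule: dec_induct)
  case base
  then show ?case
    using seg_closure_subset by blast
next
  case (step j)
  then have "seg_closure (Suc j) \<inter> seg i = (seg_closure (Suc j) \<inter> seg j) \<inter> seg i"
    using seg_mono by blast
  also have "\<dots> = seg_closure i"
    using seg_closure_Suc[OF biclosed_seg_closure] step.IH by simp
  finally show ?case .
qed

definition limit_closure :: "'v set" where
  "limit_closure = (\<Union>j. seg_closure j)"

lemma limit_closure_Int_seg: "limit_closure \<inter> seg i = seg_closure i"
proof
  show "limit_closure \<inter> seg i \<subseteq> seg_closure i"
  proof
    fix y assume "y \<in> limit_closure \<inter> seg i"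
    then obtain j where y: "y \<in> seg_closure j" "y \<in> seg i"
      unfolding limit_closure_def by blast
    show "y \<in> seg_closure i"
    proof (cases "i \<le> j")
      case True
      then show ?thesis
        using seg_closure_Int_seg y by blast
    next
      case False
      then show ?thesis
        using seg_closure_Int_seg[of j i] seg_closure_subset y(1) by auto
    qed
  qed
  show "seg_closure i \<subseteq> limit_closure \<inter> seg i"
    unfolding limit_closure_def using seg_closure_subset by blast
qed

lemma biclosed_limit_closure: "biclosed_in_set X limit_closure"
proof -
  have "limit_closure \<subseteq> X"
    unfolding limit_closure_def using seg_closure_subset seg_subset by blast
  moreover have "\<exists>T. \<alpha> \<in> T \<and> \<beta> \<in> T \<and> \<gamma> \<in> T \<and> closed_in_set T (limit_closure \<inter> T)
      \<and> closed_in_set T ((X - limit_closure) \<inter> T)"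
    if abc: "\<alpha> \<in> X" "\<beta> \<in> X" "\<gamma> \<in> X" for \<alpha> \<beta> \<gamma>
  proof -
    obtain n where "\<alpha> \<in> seg n" "\<beta> \<in> seg n" "\<gamma> \<in> seg n"
      using ex_seg_containing[OF abc] by blast
    moreover have "(X - limit_closure) \<inter> seg n = seg n - seg_closure n"
      using limit_closure_Int_seg seg_subset by blast
    ultimately show ?thesis
      using biclosed_seg_closure[of n]
      by (intro exI[of _ "seg n"]) (simp add: limit_closure_Int_seg biclosed_in_set_iff)
  qed
  ultimately show ?thesis
    unfolding biclosed_in_set_iff by (meson Diff_subset closed_in_set_if_local)
qed

lemma bclosure_Union_eq_limit_closure: "bclosure X (\<Union>\<X>) = limit_closure"
proof (rule bclosure_unique)
  show "closed_in_set X limit_closure"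
    using biclosed_limit_closure by (simp add: biclosed_in_set_iff)
  show "\<Union>\<X> \<subseteq> limit_closure"
  proof
    fix u assume "u \<in> \<Union>\<X>"
    moreover have "u \<in> seg (Suc (r u))"
      using \<open>u \<in> \<Union>\<X>\<close> Union_subset by (auto simp: mem_seg)
    ultimately have "u \<in> \<Union>\<X> \<inter> seg (Suc (r u))"
      by blast
    then have "u \<in> seg_closure (Suc (r u))"
      unfolding seg_closure_def by (rule bclosure_superset[THEN subsetD])
    then show "u \<in> limit_closure"
      unfolding limit_closure_def by blast
  qed
  fix C assume "closed_in_set X C" "\<Union>\<X> \<subseteq> C"
  then have "seg_closure j \<subseteq> C" for j
    using seg_closure_least[OF seg_subset] by blast
  then show "limit_closure \<subseteq> C"
    unfolding limit_closure_def by blast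
qed

end

lemma biclosed_bclosure_Union:
  fixes X :: "'v::euclidean_space set"
  assumes "\<And>Y. two_dim_linear_subset X Y \<Longrightarrow> \<exists>\<alpha> \<beta>. fundamental_vectors Y \<alpha> \<beta>"
    and "suitable_ordering X r"
    and "\<forall>Y\<in>\<X>. biclosed_in_set X Y"
  shows "biclosed_in_set X (bclosure X (\<Union>\<X>))"
proof -
  interpret biclosed_family X r \<X>
    using assms by unfold_locales auto
  show ?thesis
    using biclosed_limit_closure bclosure_Union_eq_limit_closure by simp
qed

theorem theorem4p1:
  fixes X :: "'v::euclidean_space set" and r :: "'v \<Rightarrow> nat"
    and \<X> :: "'v set set"
  assumes "countable X"
    and "\<And>Y. two_dim_linear_subset X Y \<Longrightarrow> \<exists>\<alpha> \<beta>. fundamental_vectors Y \<alpha> \<beta>"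
    and "suitable_ordering X r"
    and "\<forall>Y\<in>\<X>. biclosed_in_set X Y"
  shows "biclosed_in_set X (bclosure X (\<Union>\<X>))
     \<and> (\<forall>Y\<in>\<X>. Y \<subseteq> bclosure X (\<Union>\<X>))
     \<and> (\<forall>Z. biclosed_in_set X Z \<and> (\<forall>Y\<in>\<X>. Y \<subseteq> Z) \<longrightarrow> bclosure X (\<Union>\<X>) \<subseteq> Z)
     \<and> biclosed_in_set X (binterior X (\<Inter>\<X>))
     \<and> (\<forall>Y\<in>\<X>. binterior X (\<Inter>\<X>) \<subseteq> Y)
     \<and> (\<forall>Z. biclosed_in_set X Z \<and> (\<forall>Y\<in>\<X>. Z \<subseteq> Y) \<longrightarrow> Z \<subseteq> binterior X (\<Inter>\<X>))"
proof -
  let ?J = "bclosure X (\<Union>\<X>)"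
  let ?M = "binterior X (\<Inter>\<X>)"
  have M: "?M = X - bclosure X (\<Union>((\<lambda>Y. X - Y) ` \<X>))"
    unfolding binterior_def by simp
  have "Y \<subseteq> ?J" if "Y \<in> \<X>" for Y
    using that bclosure_superset[of "\<Union>\<X>" X] by blast
  moreover have "?J \<subseteq> Z" if "biclosed_in_set X Z" "\<forall>Y\<in>\<X>. Y \<subseteq> Z" for Z
    using that by (intro bclosure_least) (auto simp: biclosed_in_set_iff)
  moreover have "biclosed_in_set X ?M"
    unfolding M using assms(4)
    by (intro biclosed_in_set_Diff biclosed_bclosure_Union[OF assms(2,3)]) (auto intro: biclosed_in_set_Diff)
  moreover have "?M \<subseteq> Y" if "Y \<in> \<X>" for Y
    unfolding M using that bclosure_superset[of "\<Union>((\<lambda>Y. X - Y) ` \<X>)" X] by blast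
  moreover have "Z \<subseteq> ?M" if "biclosed_in_set X Z" "\<forall>Y\<in>\<X>. Z \<subseteq> Y" for Z
  proof -
    have "bclosure X (\<Union>((\<lambda>Y. X - Y) ` \<X>)) \<subseteq> X - Z"
      using that by (intro bclosure_least) (auto simp: biclosed_in_set_iff)
    then show ?thesis
      unfolding M using that(1) by (auto simp: biclosed_in_set_iff dest: closed_in_set_subset)
  qed
  ultimately show ?thesis
    using biclosed_bclosure_Union[OF assms(2-4)] by blast
qed

end
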